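(* Let $n\ge1$, $D\ge1$, and let $X_n=\{\mathbf{x}^0,\ldots,\mathbf{x}^{n-1}\}\subseteq\{0,1\}^D$ consist of $n$ pairwise distinct vectors, indexed so that $\mathbf{a}\cdot\mathbf{x}^0<\cdots<\mathbf{a}\cdot\mathbf{x}^{n-1}$ for some $\mathbf{a}\in\mathbb{Z}^D$. Then there is a three-layer Boolean threshold network with $D$ input nodes, $n$ nodes in the second layer and $\lceil\log_2 n\rceil$ output nodes that maps $\mathbf{x}^i$ to the $\lceil\log_2 n\rceil$-dimensional binary representation of $i$, for every $i=0,\ldots,n-1$.
   Context: A Boolean threshold function is a map $\{0,1\}^h\to\{0,1\}$, $\mathbf{u}\mapsto[\mathbf{w}\cdot\mathbf{u}\ge\theta]$ (value $1$ iff $\mathbf{w}\cdot\mathbf{u}\ge\theta$) with $\mathbf{w}\in\mathbb{Z}^h,\theta\in\mathbb{Z}$. An $L$-layer Boolean threshold network has layers $1,\ldots,L$; layer $1$ is the input; each node of layer $t+1$ computes a Boolean threshold function of the values of layer $t$; the network computes the map input $\mapsto$ values of layer $L$. *)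

theory Defs
  imports Complex_Main
begin

text \<open>Boolean vectors in {0,1}^h are bool lists of length h; integer vectors are int lists.\<close>

definition bdot :: "int list \<Rightarrow> bool list \<Rightarrow> int" where
  "bdot w u = (\<Sum>j<length u. w ! j * of_bool (u ! j))"

type_synonym tnode = "int list \<times> int"

definition eval_node :: "tnode \<Rightarrow> bool list \<Rightarrow> bool" where
  "eval_node nd u = (bdot (fst nd) u \<ge> snd nd)"

definition eval_layer :: "tnode list \<Rightarrow> bool list \<Rightarrow> bool list" where
  "eval_layer L u = map (\<lambda>nd. eval_node nd u) L"

definition wf_layer :: "nat \<Rightarrow> nat \<Rightarrow> tnode list \<Rightarrow> bool" where
  "wf_layer h k L \<longleftrightarrow> length L = k \<and> (\<forall>nd\<in>set L. length (fst nd) = h)"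

definition three_layer_net :: "nat \<Rightarrow> nat \<Rightarrow> nat \<Rightarrow> tnode list \<Rightarrow> tnode list \<Rightarrow> bool" where
  "three_layer_net D k2 k3 L2 L3 \<longleftrightarrow> wf_layer D k2 L2 \<and> wf_layer k2 k3 L3"

definition eval_net3 :: "tnode list \<Rightarrow> tnode list \<Rightarrow> bool list \<Rightarrow> bool list" where
  "eval_net3 L2 L3 u = eval_layer L3 (eval_layer L2 u)"

text \<open>m-bit binary representation of i, most significant bit first.\<close>
definition bin_rep :: "nat \<Rightarrow> nat \<Rightarrow> bool list" where
  "bin_rep m i = map (\<lambda>k. odd (i div 2 ^ (m - 1 - k))) [0..<m]"

end

theory Submission
  imports Defs
begin

text \<open>Since \<open>a\<close> orders the points strictly, a second layer of \<open>n\<close> nodes with weights \<open>a\<close>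
  and thresholds \<open>a \<cdot> x\<^sup>i\<close> maps \<open>x\<^sup>j\<close> to the thermometer code whose \<open>i\<close>-th bit is \<open>i \<le> j\<close>.
  On thermometer codes every Boolean function \<open>g\<close> of \<open>j\<close> is a threshold function: with the
  difference weights \<open>w\<^sub>i = g(i) - g(i-1)\<close> the weighted sum telescopes to \<open>g(j) \<in> {0,1}\<close>,
  so threshold 1 recovers \<open>g(j)\<close>. One such output node per bit of the binary representation
  gives the third layer.\<close>

definition thermometer_code :: "nat \<Rightarrow> nat \<Rightarrow> bool list" where
  "thermometer_code n j = map (\<lambda>i. i \<le> j) [0..<n]"

definition threshold_layer :: "int list \<Rightarrow> (nat \<Rightarrow> bool list) \<Rightarrow> nat \<Rightarrow> tnode list" where
  "threshold_layer a x n = map (\<lambda>i. (a, bdot a (x i))) [0..<n]"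

definition difference_weight :: "(nat \<Rightarrow> bool) \<Rightarrow> nat \<Rightarrow> int" where
  "difference_weight g i = of_bool (g i) - (if i = 0 then 0 else of_bool (g (i - 1)))"

definition decoder_layer :: "(nat \<Rightarrow> bool list) \<Rightarrow> nat \<Rightarrow> nat \<Rightarrow> tnode list" where
  "decoder_layer f n m = map (\<lambda>k. (map (difference_weight (\<lambda>i. f i ! k)) [0..<n], 1)) [0..<m]"

lemma wf_threshold_layer:
  "length a = D \<Longrightarrow> wf_layer D n (threshold_layer a x n)"
  by (auto simp: wf_layer_def threshold_layer_def)

lemma wf_decoder_layer: "wf_layer n m (decoder_layer f n m)"
  by (auto simp: wf_layer_def decoder_layer_def)

lemma eval_threshold_layer:
  assumes mono: "\<forall>i j. i < j \<and> j < n \<longrightarrow> bdot a (x i) < bdot a (x j)" and "j < n"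
  shows "eval_layer (threshold_layer a x n) (x j) = thermometer_code n j"
proof -
  have "(bdot a (x i) \<le> bdot a (x j)) = (i \<le> j)" if "i < n" for i
    using mono[rule_format, of i j] mono[rule_format, of j i] \<open>j < n\<close> that
    by (cases i j rule: linorder_cases) auto
  then show ?thesis
    by (simp add: eval_layer_def threshold_layer_def thermometer_code_def eval_node_def)
qed

lemma sum_difference_weight_telescope:
  "(\<Sum>i<Suc j. difference_weight g i) = of_bool (g j)"
  by (induction j) (auto simp: difference_weight_def)

lemma bdot_difference_weight_thermometer_code:
  assumes "j < n"
  shows "bdot (map (difference_weight g) [0..<n]) (thermometer_code n j) = of_bool (g j)"
proof -
  have "bdot (map (difference_weight g) [0..<n]) (thermometer_code n j)
      = (\<Sum>i<n. difference_weight g i * of_bool (i \<le> j))"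
    by (simp add: bdot_def thermometer_code_def)
  also have "\<dots> = (\<Sum>i\<in>{..<n} \<inter> {i. i \<le> j}. difference_weight g i)"
    by (simp add: sum.inter_restrict)
  also have "{..<n} \<inter> {i. i \<le> j} = {..<Suc j}"
    using assms by auto
  finally show ?thesis
    using sum_difference_weight_telescope by simp
qed

lemma eval_node_difference_weight:
  "j < n \<Longrightarrow> eval_node (map (difference_weight g) [0..<n], 1) (thermometer_code n j) = g j"
  by (simp add: eval_node_def bdot_difference_weight_thermometer_code)

lemma eval_decoder_layer:
  assumes "j < n" and "length (f j) = m"
  shows "eval_layer (decoder_layer f n m) (thermometer_code n j) = f j"
  using assms
  by (intro nth_equalityI)
    (simp_all add: eval_layer_def decoder_layer_def eval_node_difference_weight)

theorem theorem14:
  fixes n D :: nat and x :: "nat \<Rightarrow> bool list" and a :: "int list"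
  assumes "n \<ge> 1" and "D \<ge> 1"
    and "\<forall>i<n. length (x i) = D"
    and "\<forall>i<n. \<forall>j<n. i \<noteq> j \<longrightarrow> x i \<noteq> x j"
    and "length a = D"
    and "\<forall>i j. i < j \<and> j < n \<longrightarrow> bdot a (x i) < bdot a (x j)"
  shows "\<exists>L2 L3. three_layer_net D n (nat \<lceil>log 2 (real n)\<rceil>) L2 L3 \<and>
           (\<forall>i<n. eval_net3 L2 L3 (x i) = bin_rep (nat \<lceil>log 2 (real n)\<rceil>) i)"
proof -
  define m where "m = nat \<lceil>log 2 (real n)\<rceil>"
  define L2 where "L2 = threshold_layer a x n"
  define L3 where "L3 = decoder_layer (bin_rep m) n m"
  have "three_layer_net D n m L2 L3"
    unfolding three_layer_net_def L2_def L3_def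
    using wf_threshold_layer[OF assms(5)] wf_decoder_layer by blast
  moreover have "eval_net3 L2 L3 (x j) = bin_rep m j" if "j < n" for j
    unfolding eval_net3_def L2_def L3_def
    using that eval_threshold_layer[OF assms(6)] eval_decoder_layer
    by (simp add: bin_rep_def)
  ultimately show ?thesis
    unfolding m_def by blast
qed

end
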